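(* Let $\mathcal{F}:\mathbb{R}^K\to\mathbb{R}^K$ be bijective with $\mathcal{F}$ and $\mathcal{F}^{-1}$ both continuously differentiable. Let $\|\cdot\|$ be an induced matrix norm (with the associated vector norm), and suppose there are constants $\gamma,\zeta,\beta$ such that $\|J(x_1)-J(x_2)\|\le\gamma$, $\|J(x)\|\le\zeta$ and $\|J^{-1}(x)\|\le\beta$ for all $x_1,x_2,x\in\mathbb{R}^K$. Let $y_1,\dots,y_M\in\mathbb{R}^K$ be desired outputs, let $x_1^0,\dots,x_M^0\in\mathbb{R}^K$ be initial inputs, and run Iterative Inversion with affine least-squares regression (as in the context). Suppose that for every iteration $n$: $\|\overline{\mathcal{F}(X^n)}-\mathcal{F}(\overline{X^n})\|\le\lambda$, and $\tilde{J}_n^{-1}=J^{-1}(\overline{X^n})(I+\Delta_n)$ for some matrix $\Delta_n$ with $\|\Delta_n\|\le\delta<1/(\zeta\beta)$. Let $\mu=\frac{\zeta^2\beta\delta}{1-\zeta\beta\delta}$ and assume $\beta(1+\delta)(\gamma+\mu)<1$. Let $\rho=\frac{2\lambda\beta(1+\delta)(\mu+\zeta)}{1-\beta(1+\delta)(\mu+\gamma)}$. Then for every $\epsilon>0$ there exists $k<\infty$ such that $\|\overline{\mathcal{F}(X^k)}-\overline{Y}\|\le\rho+\epsilon$.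
   Context: Vectors are row vectors. $J(x)\in\mathbb{R}^{K\times K}$ denotes the Jacobian of $\mathcal{F}$ at $x$ in the row convention, $\mathcal{F}(x+h)=\mathcal{F}(x)+hJ(x)+o(\|h\|)$, and $J^{-1}(x)=[J(x)]^{-1}$ (the Jacobian of $\mathcal{F}^{-1}$ at $\mathcal{F}(x)$). Iterative Inversion (affine least-squares version): with $X^n=(x_1^n,\dots,x_M^n)^T\in\mathbb{R}^{M\times K}$, $\mathcal{F}(X^n)=(\mathcal{F}(x_1^n),\dots,\mathcal{F}(x_M^n))^T$, row means $\overline{X^n}=\frac1M\sum_i x_i^n$, $\overline{\mathcal{F}(X^n)}=\frac1M\sum_i\mathcal{F}(x_i^n)$, $\overline{Y}=\frac1M\sum_i y_i$, and $\mathbf{1}$ the all-ones column vector of length $M$, set $\Theta_{n+1}=(\mathcal{F}(X^n)-\mathbf{1}\overline{\mathcal{F}(X^n)})^{\dagger}(X^n-\mathbf{1}\overline{X^n})$ and $b_{n+1}=\overline{X^n}-\overline{\mathcal{F}(X^n)}\Theta_{n+1}$ (the minimum-norm least-squares fit of $x\approx \mathcal{F}(x)\Theta+b$ on the pairs $(\mathcal{F}(x_i^n),x_i^n)$; $\dagger$ is the Moore–Penrose pseudoinverse), and $x_i^{n+1}=y_i\Theta_{n+1}+b_{n+1}$. Define $\tilde{J}_n^{-1}=\Theta_{n+1}=(\mathcal{F}(X^n)-\mathbf{1}\overline{\mathcal{F}(X^n)})^{\dagger}(X^n-\mathbf{1}\overline{X^n})$. *)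

theory Defs
  imports "HOL-Analysis.Analysis"
begin

text \<open>Vectors are row vectors in real^'k; a collection of M points is a matrix
  real^'k^'m whose i-th row is the i-th point. Row-vector times matrix is v*.\<close>

definition is_vnorm :: "(real^'k \<Rightarrow> real) \<Rightarrow> bool" where
  "is_vnorm N \<longleftrightarrow> (\<forall>x. 0 \<le> N x) \<and> (\<forall>x. N x = 0 \<longleftrightarrow> x = 0) \<and>
     (\<forall>x y. N (x + y) \<le> N x + N y) \<and> (\<forall>c x. N (c *\<^sub>R x) = \<bar>c\<bar> * N x)"

definition ind_norm :: "(real^'k \<Rightarrow> real) \<Rightarrow> real^'k^'k \<Rightarrow> real" where
  "ind_norm N A = (SUP x\<in>-{0}. N (x v* A) / N x)"

definition pinv :: "real^'k^'m \<Rightarrow> real^'m^'k" where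
  "pinv A = (THE P. A ** P ** A = A \<and> P ** A ** P = P \<and>
      transpose (A ** P) = A ** P \<and> transpose (P ** A) = P ** A)"

definition rowmean :: "real^'k^'m \<Rightarrow> real^'k" where
  "rowmean A = (1 / real CARD('m)) *\<^sub>R (\<Sum>i\<in>UNIV. A $ i)"

definition center :: "real^'k^'m \<Rightarrow> real^'k^'m" where
  "center A = (\<chi> i. A $ i - rowmean A)"

definition mapF :: "(real^'k \<Rightarrow> real^'k) \<Rightarrow> real^'k^'m \<Rightarrow> real^'k^'m" where
  "mapF F A = (\<chi> i. F (A $ i))"

text \<open>Theta_{n+1} = (F(X^n) - 1 mean F(X^n))^dagger (X^n - 1 mean X^n), i.e. tilde J_n^{-1}.\<close>
definition theta :: "(real^'k \<Rightarrow> real^'k) \<Rightarrow> real^'k^'m \<Rightarrow> real^'k^'k" where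
  "theta F A = pinv (center (mapF F A)) ** center A"

definition offset :: "(real^'k \<Rightarrow> real^'k) \<Rightarrow> real^'k^'m \<Rightarrow> real^'k" where
  "offset F A = rowmean A - rowmean (mapF F A) v* theta F A"

definition ii_step :: "(real^'k \<Rightarrow> real^'k) \<Rightarrow> real^'k^'m \<Rightarrow> real^'k^'m \<Rightarrow> real^'k^'m" where
  "ii_step F Y A = (\<chi> i. Y $ i v* theta F A + offset F A)"

end

theory Submission
  imports Defs
begin

(* Let e_n be the residual of the mean output, the row mean of F(X^n) minus the row mean of Y.
   The affine fit reproduces row means, so the mean input moves by the step h = -e_n Theta_{n+1}.
   Linearising F at the mean input (error at most gamma N h, by a mean-value inequality for N),
   using Theta_{n+1} = J^{-1}(I + Delta_n), and paying lambda twice for the gap between the mean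
   of F and F of the mean gives N e_{n+1} <= 2 lambda + q N e_n with
   q = beta (1 + delta) gamma + zeta beta delta <= beta (1 + delta) (gamma + mu) < 1.
   Hence N e_n eventually comes within any epsilon of 2 lambda / (1 - q) <= rho. *)

lemma vector_matrix_mult_minus: "(- x) v* (A :: 'a::ring_1^'m^'n) = - (x v* A)"
  using vector_matrix_mult_diff_distrib[of 0 x A] by simp

lemma vector_matrix_mult_sum: "sum f S v* (A :: real^'m^'n) = (\<Sum>i\<in>S. f i v* A)"
  by (induction S rule: infinite_finite_induct) (simp_all add: vector_matrix_left_distrib)

lemma matrix_inv_left:
  fixes A :: "'a::semiring_1^'n^'n"
  assumes "invertible A"
  shows "matrix_inv A ** A = mat 1"
  using someI_ex[OF assms[unfolded invertible_def]] unfolding matrix_inv_def by blast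

lemma invertible_derivative_if_inverse_differentiable:
  fixes F :: "real^'k \<Rightarrow> real^'k"
  assumes "inj F"
    and "(F has_derivative (\<lambda>h. h v* A)) (at x)"
    and "(inv F has_derivative (\<lambda>h. h v* B)) (at (F x))"
  shows "invertible A"
proof -
  have "((inv F \<circ> F) has_derivative ((\<lambda>h. h v* B) \<circ> (\<lambda>h. h v* A))) (at x)"
    using assms(2,3) by (rule diff_chain_at)
  moreover have "inv F \<circ> F = id"
    using \<open>inj F\<close> by simp
  ultimately have "(\<lambda>h. h v* B) \<circ> (\<lambda>h. h v* A) = id"
    using has_derivative_unique has_derivative_id by metis
  then have "transpose (A ** B) *v h = transpose (mat 1) *v h" for h
    by (simp add: fun_eq_iff vector_matrix_mul_assoc)
  then have "A ** B = mat 1"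
    by (metis matrix_eq transpose_transpose)
  then show ?thesis
    using invertible_right_inverse by blast
qed

lemma inner_linearization_error_mvt:
  fixes F :: "real^'k \<Rightarrow> real^'k" and J :: "real^'k \<Rightarrow> real^'k^'k"
  assumes F_deriv: "\<And>x. (F has_derivative (\<lambda>h. h v* J x)) (at x)"
  shows "\<exists>s. 0 < s \<and> s < 1 \<and>
    inner a (F (x + h) - F x - h v* J x) = inner a (h v* (J (x + s *\<^sub>R h) - J x))"
proof -
  define \<phi> where "\<phi> t = inner a (F (x + t *\<^sub>R h) - t *\<^sub>R (h v* J x))" for t
  define \<phi>' where "\<phi>' t = inner a (h v* (J (x + t *\<^sub>R h) - J x))" for t
  have "DERIV \<phi> t :> \<phi>' t" for t
  proof -
    have "((\<lambda>t. x + t *\<^sub>R h) has_derivative (\<lambda>s. s *\<^sub>R h)) (at t)"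
      by (auto intro!: derivative_eq_intros)
    from diff_chain_at[OF this F_deriv]
    have "((\<lambda>t. F (x + t *\<^sub>R h) - t *\<^sub>R (h v* J x)) has_derivative
        (\<lambda>s. (s *\<^sub>R h) v* J (x + t *\<^sub>R h) - s *\<^sub>R (h v* J x))) (at t)"
      by (auto simp: o_def intro!: derivative_eq_intros)
    from has_derivative_inner_right[OF this, of a]
    show ?thesis unfolding has_field_derivative_def \<phi>_def
      by (rule has_derivative_eq_rhs)
        (simp add: fun_eq_iff \<phi>'_def scaleR_vector_matrix_assoc inner_diff_right
           vector_matrix_mult_diff_distrib[symmetric] algebra_simps)
  qed
  then obtain s where "0 < s" "s < 1" "\<phi> 1 - \<phi> 0 = (1 - 0) * \<phi>' s"
    using MVT2[of 0 1 \<phi> \<phi>'] by auto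
  moreover have "\<phi> 1 - \<phi> 0 = inner a (F (x + h) - F x - h v* J x)"
    unfolding \<phi>_def by (simp add: inner_diff_right)
  ultimately show ?thesis
    unfolding \<phi>'_def by auto
qed

lemma rowmean_ii_step:
  fixes Y A :: "real^'k^'m"
  shows "rowmean (ii_step F Y A) = rowmean A - (rowmean (mapF F A) - rowmean Y) v* theta F A"
proof -
  have "rowmean (ii_step F Y A) = rowmean Y v* theta F A + offset F A"
    by (simp add: rowmean_def ii_step_def sum.distrib vector_matrix_mult_sum scaleR_add_right
        scaleR_vector_matrix_assoc sum_constant_scaleR del: sum_constant)
  then show ?thesis
    unfolding offset_def by (simp add: vector_matrix_mult_diff_distrib algebra_simps)
qed

lemma affine_recursion_eventually_le:
  fixes a :: "nat \<Rightarrow> real"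
  assumes step: "\<And>n. a (Suc n) \<le> c + q * a n" and "0 \<le> q" "q < 1" "0 < \<epsilon>"
  shows "\<exists>n. a n \<le> c / (1 - q) + \<epsilon>"
proof -
  define L where "L = c / (1 - q)"
  have c_eq: "c = (1 - q) * L"
    using \<open>q < 1\<close> by (simp add: L_def)
  have contract: "a n - L \<le> q ^ n * (a 0 - L)" for n
  proof (induction n)
    case (Suc n)
    have "a (Suc n) - L \<le> q * (a n - L)"
      using step[of n] c_eq by (simp add: algebra_simps)
    also have "\<dots> \<le> q * (q ^ n * (a 0 - L))"
      using Suc \<open>0 \<le> q\<close> by (rule mult_left_mono)
    finally show ?case by simp
  qed simp
  have "(\<lambda>n. q ^ n * (a 0 - L)) \<longlonglongrightarrow> 0"
    using \<open>0 \<le> q\<close> \<open>q < 1\<close> by (intro tendsto_mult_left_zero LIMSEQ_power_zero) simp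
  from order_tendstoD(2)[OF this \<open>0 < \<epsilon>\<close>]
  obtain n where "q ^ n * (a 0 - L) < \<epsilon>"
    unfolding eventually_sequentially by blast
  then have "a n \<le> L + \<epsilon>"
    using contract[of n] by linarith
  then show ?thesis
    unfolding L_def by blast
qed

locale vnorm =
  fixes N :: "real^'k \<Rightarrow> real"
  assumes is_vnorm: "is_vnorm N"
begin

lemma N_nonneg: "0 \<le> N x"
  using is_vnorm unfolding is_vnorm_def by blast

lemma N_eq_0_iff: "N x = 0 \<longleftrightarrow> x = 0"
  using is_vnorm unfolding is_vnorm_def by blast

lemma N_triangle: "N (x + y) \<le> N x + N y"
  using is_vnorm unfolding is_vnorm_def by blast

lemma N_scaleR: "N (c *\<^sub>R x) = \<bar>c\<bar> * N x"
  using is_vnorm unfolding is_vnorm_def by blast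

lemma N_zero [simp]: "N 0 = 0"
  by (simp add: N_eq_0_iff)

lemma N_pos: "x \<noteq> 0 \<Longrightarrow> 0 < N x"
  using N_nonneg N_eq_0_iff by (metis order_le_less)

lemma N_minus [simp]: "N (- x) = N x"
  using N_scaleR[of "-1" x] by simp

lemma N_minus_commute: "N (x - y) = N (y - x)"
  by (metis N_minus minus_diff_eq)

lemma N_triangle_le_add: "N x \<le> a \<Longrightarrow> N y \<le> b \<Longrightarrow> N (x + y) \<le> a + b"
  using N_triangle[of x y] by linarith

lemma N_diff_le_add: "N x \<le> a \<Longrightarrow> N y \<le> b \<Longrightarrow> N (x - y) \<le> a + b"
  using N_triangle_le_add[of x a "- y" b] by simp

lemma convex_on_N: "convex_on UNIV N"
  unfolding convex_on_def
proof (intro conjI convex_UNIV ballI allI impI)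
  fix x y :: "real^'k" and u v :: real
  assume "0 \<le> u" "0 \<le> v"
  then show "N (u *\<^sub>R x + v *\<^sub>R y) \<le> u * N x + v * N y"
    using N_triangle[of "u *\<^sub>R x" "v *\<^sub>R y"] by (simp add: N_scaleR)
qed

lemma continuous_on_N: "continuous_on S N"
  using convex_on_continuous[OF open_UNIV convex_on_N] continuous_on_subset by blast

lemma convex_N_le: "convex {v. N v \<le> r}"
proof (rule convexI, clarsimp)
  fix x y :: "real^'k" and u v :: real
  assume "N x \<le> r" "N y \<le> r" "0 \<le> u" "0 \<le> v" "u + v = 1"
  then have "N (u *\<^sub>R x + v *\<^sub>R y) \<le> u * r + v * r"
    using N_triangle[of "u *\<^sub>R x" "v *\<^sub>R y"] mult_left_mono[of "N x" r u] mult_left_mono[of "N y" r v]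
    by (simp add: N_scaleR)
  then show "N (u *\<^sub>R x + v *\<^sub>R y) \<le> r"
    using \<open>u + v = 1\<close> by (simp add: distrib_right[symmetric])
qed

lemma closed_N_le: "closed {v. N v \<le> r}"
  by (rule closed_Collect_le[OF continuous_on_N continuous_on_const])

lemma bdd_above_ind_norm_quotients: "bdd_above ((\<lambda>x. N (x v* A) / N x) ` (-{0}))"
proof -
  let ?q = "\<lambda>x. N (x v* A) / N x"
  have "?q x \<in> ?q ` sphere 0 1" if "x \<noteq> 0" for x
  proof -
    have "?q x = ?q ((1 / norm x) *\<^sub>R x)"
      using that by (simp add: scaleR_vector_matrix_assoc N_scaleR)
    moreover have "(1 / norm x) *\<^sub>R x \<in> sphere 0 1"
      using that by simp
    ultimately show ?thesis by blast
  qed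
  then have sub: "?q ` (-{0}) \<subseteq> ?q ` sphere 0 1" by auto
  have "continuous_on (sphere 0 1) ?q"
  proof (intro continuous_on_divide continuous_on_compose2[OF continuous_on_N])
    show "continuous_on (sphere 0 1) (\<lambda>x. x v* A)"
      using linear_continuous_on[of "(*v) (transpose A)"] by (simp add: linear_conv_bounded_linear)
  qed (auto simp: N_eq_0_iff continuous_on_N)
  then have "bounded (?q ` sphere 0 1)"
    by (intro compact_imp_bounded compact_continuous_image compact_sphere)
  then have "bounded (?q ` (-{0}))"
    using sub by (rule bounded_subset)
  then show ?thesis
    by (rule bounded_imp_bdd_above)
qed

lemma N_vector_matrix_le: "N (x v* A) \<le> ind_norm N A * N x"
proof (cases "x = 0")
  case False
  then have "N (x v* A) / N x \<le> ind_norm N A"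
    unfolding ind_norm_def by (intro cSUP_upper bdd_above_ind_norm_quotients) simp
  then show ?thesis
    using N_pos[OF False] by (simp add: divide_le_eq)
qed simp

lemma ind_norm_nonneg: "0 \<le> ind_norm N A"
proof -
  have "axis undefined 1 \<in> - {0 :: real^'k}" by simp
  then have "N (axis undefined 1 v* A) / N (axis undefined 1) \<le> ind_norm N A"
    unfolding ind_norm_def by (intro cSUP_upper bdd_above_ind_norm_quotients)
  then show ?thesis
    using N_nonneg[of "axis undefined 1 v* A"] N_nonneg[of "axis undefined 1"]
    by (meson divide_nonneg_nonneg order_trans)
qed

lemma N_vector_matrix_le_bound: "ind_norm N A \<le> c \<Longrightarrow> N (x v* A) \<le> c * N x"
  using N_vector_matrix_le[of x A] mult_right_mono[OF _ N_nonneg] by (meson order_trans)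

lemma one_le_ind_norm_mult:
  assumes "B ** A = mat 1"
  shows "1 \<le> ind_norm N A * ind_norm N B"
proof -
  let ?x = "axis undefined 1 :: real^'k"
  have "N ?x = N ((?x v* B) v* A)"
    using assms by (simp add: vector_matrix_mul_assoc)
  also have "\<dots> \<le> ind_norm N A * (ind_norm N B * N ?x)"
    using N_vector_matrix_le[of "?x v* B" A] N_vector_matrix_le[of ?x B] ind_norm_nonneg
    by (meson mult_left_mono order_trans)
  finally have "1 * N ?x \<le> (ind_norm N A * ind_norm N B) * N ?x" by simp
  then show ?thesis
    using N_pos[of ?x] by simp
qed

lemma N_le_if_inner_le:
  assumes "\<And>a. \<exists>v. N v \<le> r \<and> inner a v \<le> inner a z"
  shows "N z \<le> r"
proof (rule ccontr)
  assume "\<not> N z \<le> r"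
  then obtain a b where "inner a z < b" "\<And>v. N v \<le> r \<Longrightarrow> inner a v > b"
    using separating_hyperplane_closed_point[OF convex_N_le closed_N_le, of z r] by auto
  with assms[of a] show False by force
qed

(* The Euclidean mean-value inequality does not apply to N. Instead, for every linear functional
   the scalar mean value theorem yields a point of the closed convex N-ball of radius gamma N h
   with the same value as the error, so no hyperplane separates the error from that ball. *)
lemma N_linearization_error_le:
  fixes F :: "real^'k \<Rightarrow> real^'k" and J :: "real^'k \<Rightarrow> real^'k^'k"
  assumes F_deriv: "\<And>x. (F has_derivative (\<lambda>h. h v* J x)) (at x)"
    and J_var: "\<And>z. ind_norm N (J z - J x) \<le> \<gamma>"
  shows "N (F (x + h) - F x - h v* J x) \<le> \<gamma> * N h"
proof (rule N_le_if_inner_le)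
  fix a
  obtain s where "inner a (F (x + h) - F x - h v* J x) = inner a (h v* (J (x + s *\<^sub>R h) - J x))"
    using inner_linearization_error_mvt[OF F_deriv] by blast
  moreover have "N (h v* (J (x + s *\<^sub>R h) - J x)) \<le> \<gamma> * N h"
    using J_var by (rule N_vector_matrix_le_bound)
  ultimately show "\<exists>v. N v \<le> \<gamma> * N h \<and> inner a v \<le> inner a (F (x + h) - F x - h v* J x)"
    by (metis order_refl)
qed

(* x and f are the mean input and mean output of an iterate, y the mean target, and
   x - (f - y) Ji (I + D) and f' the mean input and mean output of the next iterate. *)
lemma mean_residual_step:
  fixes F :: "real^'k \<Rightarrow> real^'k" and J :: "real^'k \<Rightarrow> real^'k^'k"
  assumes F_deriv: "\<And>x. (F has_derivative (\<lambda>h. h v* J x)) (at x)"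
    and J_var: "\<And>z. ind_norm N (J z - J x) \<le> \<gamma>"
    and J_bound: "ind_norm N (J x) \<le> \<zeta>"
    and Ji_bound: "ind_norm N Ji \<le> \<beta>"
    and D_bound: "ind_norm N D \<le> \<delta>"
    and left_inv: "Ji ** J x = mat 1"
    and f: "N (f - F x) \<le> lam"
    and f': "N (f' - F (x - (f - y) v* (Ji ** (mat 1 + D)))) \<le> lam"
  shows "N (f' - y) \<le> 2 * lam + (\<beta> * (1 + \<delta>) * \<gamma> + \<zeta> * \<delta> * \<beta>) * N (f - y)"
proof -
  define e where "e = f - y"
  define u where "u = e v* Ji"
  define h where "h = - (u + u v* D)"
  have "0 \<le> \<gamma>" "0 \<le> \<zeta>" "0 \<le> \<beta>" "0 \<le> \<delta>"
    using J_var[of x] J_bound Ji_bound D_bound ind_norm_nonneg order_trans by blast+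
  have step: "x - e v* (Ji ** (mat 1 + D)) = x + h"
    unfolding h_def u_def
    by (simp add: vector_matrix_mul_assoc[symmetric] vector_matrix_mult_add_rdistrib)
  have "u v* J x = e"
    unfolding u_def using left_inv by (simp add: vector_matrix_mul_assoc)
  then have "h v* J x = - e - (u v* D) v* J x"
    unfolding h_def by (simp add: vector_matrix_mult_diff_distrib vector_matrix_mult_minus)
  then have decomp: "f' - y = (f' - F (x + h)) + (F (x + h) - F x - h v* J x) + (F x - f)
      - (u v* D) v* J x"
    unfolding e_def by (simp add: algebra_simps)
  have Nu: "N u \<le> \<beta> * N e"
    unfolding u_def using Ji_bound by (rule N_vector_matrix_le_bound)
  have NuD: "N (u v* D) \<le> \<delta> * (\<beta> * N e)"
    using N_vector_matrix_le_bound[OF D_bound] mult_left_mono[OF Nu \<open>0 \<le> \<delta>\<close>] by (rule order_trans)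
  have "N h \<le> N u + N (u v* D)"
    unfolding h_def N_minus by (rule N_triangle)
  then have Nh: "N h \<le> \<beta> * (1 + \<delta>) * N e"
    using Nu NuD by (simp add: algebra_simps)
  have "N (f' - y) \<le> N (f' - F (x + h)) + N (F (x + h) - F x - h v* J x) + N (F x - f)
      + N ((u v* D) v* J x)"
    unfolding decomp by (intro N_diff_le_add N_triangle_le_add order_refl)
  also have "\<dots> \<le> lam + \<gamma> * (\<beta> * (1 + \<delta>) * N e) + lam + \<zeta> * (\<delta> * (\<beta> * N e))"
  proof (intro add_mono)
    show "N (f' - F (x + h)) \<le> lam"
      using f'[folded e_def] unfolding step .
    show "N (F (x + h) - F x - h v* J x) \<le> \<gamma> * (\<beta> * (1 + \<delta>) * N e)"
      using N_linearization_error_le[OF F_deriv J_var] mult_left_mono[OF Nh \<open>0 \<le> \<gamma>\<close>]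
      by (rule order_trans)
    show "N (F x - f) \<le> lam"
      using f N_minus_commute by simp
    show "N ((u v* D) v* J x) \<le> \<zeta> * (\<delta> * (\<beta> * N e))"
      using N_vector_matrix_le_bound[OF J_bound] mult_left_mono[OF NuD \<open>0 \<le> \<zeta>\<close>]
      by (rule order_trans)
  qed
  finally show ?thesis
    unfolding e_def by (simp add: algebra_simps)
qed

lemma ii_step_mean_residual_le:
  fixes F :: "real^'k \<Rightarrow> real^'k" and J :: "real^'k \<Rightarrow> real^'k^'k" and X Y :: "real^'k^'m"
  assumes F_deriv: "\<And>x. (F has_derivative (\<lambda>h. h v* J x)) (at x)"
    and J_var: "\<And>x z. ind_norm N (J z - J x) \<le> \<gamma>"
    and J_bound: "\<And>x. ind_norm N (J x) \<le> \<zeta>"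
    and Ji_bound: "\<And>x. ind_norm N (matrix_inv (J x)) \<le> \<beta>"
    and left_inv: "\<And>x. matrix_inv (J x) ** J x = mat 1"
    and theta: "theta F X = matrix_inv (J (rowmean X)) ** (mat 1 + D)"
    and D_bound: "ind_norm N D \<le> \<delta>"
    and lam: "N (rowmean (mapF F X) - F (rowmean X)) \<le> lam"
    and lam': "N (rowmean (mapF F (ii_step F Y X)) - F (rowmean (ii_step F Y X))) \<le> lam"
  shows "N (rowmean (mapF F (ii_step F Y X)) - rowmean Y)
    \<le> 2 * lam + (\<beta> * (1 + \<delta>) * \<gamma> + \<zeta> * \<delta> * \<beta>) * N (rowmean (mapF F X) - rowmean Y)"
  using mean_residual_step[OF F_deriv J_var J_bound Ji_bound D_bound left_inv lam]
    lam'[unfolded rowmean_ii_step theta] .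

end

lemma iterative_inversion_constants:
  fixes \<gamma> \<zeta> \<beta> \<delta> lam \<mu> \<rho> :: real
  assumes "0 \<le> \<gamma>" "0 \<le> \<zeta>" "0 \<le> \<beta>" "0 \<le> \<delta>" "0 \<le> lam" "1 \<le> \<zeta> * \<beta>"
    and delta: "\<delta> < 1 / (\<zeta> * \<beta>)"
    and mu: "\<mu> = \<zeta>^2 * \<beta> * \<delta> / (1 - \<zeta> * \<beta> * \<delta>)"
    and contr: "\<beta> * (1 + \<delta>) * (\<gamma> + \<mu>) < 1"
    and rho: "\<rho> = 2 * lam * \<beta> * (1 + \<delta>) * (\<mu> + \<zeta>) / (1 - \<beta> * (1 + \<delta>) * (\<mu> + \<gamma>))"
  shows "\<beta> * (1 + \<delta>) * \<gamma> + \<zeta> * \<delta> * \<beta> \<le> \<beta> * (1 + \<delta>) * (\<gamma> + \<mu>)"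
    and "2 * lam / (1 - \<beta> * (1 + \<delta>) * (\<gamma> + \<mu>)) \<le> \<rho>"
proof -
  define s where "s = \<zeta> * \<beta> * \<delta>"
  have "0 \<le> s" "s < 1"
    using assms(1-6) delta unfolding s_def by (simp_all add: less_divide_eq mult.commute)
  have mu_s: "\<beta> * \<mu> = \<zeta> * \<beta> * (s / (1 - s))"
    unfolding mu s_def by (simp add: power2_eq_square algebra_simps)
  have "0 \<le> \<mu>"
    unfolding mu using \<open>s < 1\<close> assms(2-4) by (simp add: s_def)
  have "s \<le> s / (1 - s)"
    using \<open>0 \<le> s\<close> \<open>s < 1\<close> by (simp add: le_divide_eq mult_left_le)
  also have "\<dots> \<le> \<beta> * \<mu>"
    unfolding mu_s using mult_right_mono[OF \<open>1 \<le> \<zeta> * \<beta>\<close>, of "s / (1 - s)"] \<open>0 \<le> s\<close> \<open>s < 1\<close>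
    by simp
  also have "\<dots> \<le> \<beta> * (1 + \<delta>) * \<mu>"
    using \<open>0 \<le> \<beta>\<close> \<open>0 \<le> \<delta>\<close> \<open>0 \<le> \<mu>\<close> by (simp add: algebra_simps)
  finally show "\<beta> * (1 + \<delta>) * \<gamma> + \<zeta> * \<delta> * \<beta> \<le> \<beta> * (1 + \<delta>) * (\<gamma> + \<mu>)"
    unfolding s_def by (simp add: algebra_simps)
  have "\<zeta> * \<beta> \<le> \<beta> * (1 + \<delta>) * (\<mu> + \<zeta>)"
    using assms(2-4) \<open>0 \<le> \<mu>\<close> by (simp add: algebra_simps)
  then have "2 * lam * 1 \<le> 2 * lam * (\<beta> * (1 + \<delta>) * (\<mu> + \<zeta>))"
    using \<open>1 \<le> \<zeta> * \<beta>\<close> \<open>0 \<le> lam\<close> by (intro mult_left_mono) auto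
  then have "2 * lam / (1 - \<beta> * (1 + \<delta>) * (\<gamma> + \<mu>))
      \<le> 2 * lam * (\<beta> * (1 + \<delta>) * (\<mu> + \<zeta>)) / (1 - \<beta> * (1 + \<delta>) * (\<gamma> + \<mu>))"
    using contr by (intro divide_right_mono) auto
  then show "2 * lam / (1 - \<beta> * (1 + \<delta>) * (\<gamma> + \<mu>)) \<le> \<rho>"
    unfolding rho by (simp add: add.commute mult.assoc)
qed

theorem theorem2:
  fixes F :: "real^'k \<Rightarrow> real^'k"
    and J :: "real^'k \<Rightarrow> real^'k^'k"
    and N :: "real^'k \<Rightarrow> real"
    and Y :: "real^'k^'m"
    and X :: "nat \<Rightarrow> real^'k^'m"
    and \<gamma> \<zeta> \<beta> lam \<delta> \<mu> \<rho> :: real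
  assumes bij: "bij F"
    and F_deriv: "\<And>x. (F has_derivative (\<lambda>h. h v* J x)) (at x)"
    and J_cont: "continuous_on UNIV J"
    and Finv_C1: "\<exists>Jg :: real^'k \<Rightarrow> real^'k^'k.
        (\<forall>y. (inv F has_derivative (\<lambda>h. h v* Jg y)) (at y)) \<and> continuous_on UNIV Jg"
    and N: "is_vnorm N"
    and gamma: "\<And>x1 x2. ind_norm N (J x1 - J x2) \<le> \<gamma>"
    and zeta: "\<And>x. ind_norm N (J x) \<le> \<zeta>"
    and beta: "\<And>x. ind_norm N (matrix_inv (J x)) \<le> \<beta>"
    and iter: "\<And>n. X (Suc n) = ii_step F Y (X n)"
    and lam_bd: "\<And>n. N (rowmean (mapF F (X n)) - F (rowmean (X n))) \<le> lam"
    and Delta: "\<And>n. \<exists>\<Delta>. theta F (X n) = matrix_inv (J (rowmean (X n))) ** (mat 1 + \<Delta>)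
                         \<and> ind_norm N \<Delta> \<le> \<delta>"
    and delta: "\<delta> < 1 / (\<zeta> * \<beta>)"
    and mu: "\<mu> = \<zeta>^2 * \<beta> * \<delta> / (1 - \<zeta> * \<beta> * \<delta>)"
    and contr: "\<beta> * (1 + \<delta>) * (\<gamma> + \<mu>) < 1"
    and rho: "\<rho> = 2 * lam * \<beta> * (1 + \<delta>) * (\<mu> + \<zeta>) / (1 - \<beta> * (1 + \<delta>) * (\<mu> + \<gamma>))"
  shows "\<forall>\<epsilon>>0. \<exists>k. N (rowmean (mapF F (X k)) - rowmean Y) \<le> \<rho> + \<epsilon>"
proof -
  interpret vnorm N by (rule vnorm.intro[OF N])
  define e where "e n = rowmean (mapF F (X n)) - rowmean Y" for n
  define q where "q = \<beta> * (1 + \<delta>) * (\<gamma> + \<mu>)"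
  have left_inv: "matrix_inv (J x) ** J x = mat 1" for x
    using Finv_C1 bij_is_inj[OF bij] F_deriv
    by (metis matrix_inv_left invertible_derivative_if_inverse_differentiable)
  have nonneg: "0 \<le> \<gamma>" "0 \<le> \<zeta>" "0 \<le> \<beta>" "0 \<le> \<delta>" "0 \<le> lam"
    using gamma[of 0 0] zeta[of 0] beta[of 0] Delta[of 0] lam_bd[of 0] ind_norm_nonneg N_nonneg
      order_trans by blast+
  have "1 \<le> \<zeta> * \<beta>"
    using one_le_ind_norm_mult[OF left_inv[of 0]] zeta[of 0] beta[of 0] ind_norm_nonneg
    by (meson mult_mono order_trans)
  note rate = iterative_inversion_constants[OF nonneg this delta mu contr rho, folded q_def]
  have "q < 1"
    using contr unfolding q_def .
  have "0 \<le> q"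
    using rate(1) nonneg by (smt (verit) mult_nonneg_nonneg)
  have "N (e (Suc n)) \<le> 2 * lam + q * N (e n)" for n
  proof -
    obtain D where "theta F (X n) = matrix_inv (J (rowmean (X n))) ** (mat 1 + D)" "ind_norm N D \<le> \<delta>"
      using Delta by blast
    from ii_step_mean_residual_le[OF F_deriv gamma zeta beta left_inv this lam_bd[of n]
        lam_bd[of "Suc n", unfolded iter]]
    have "N (e (Suc n)) \<le> 2 * lam + (\<beta> * (1 + \<delta>) * \<gamma> + \<zeta> * \<delta> * \<beta>) * N (e n)"
      unfolding e_def iter .
    then show ?thesis
      using mult_right_mono[OF rate(1) N_nonneg[of "e n"]] by linarith
  qed
  from affine_recursion_eventually_le[of "\<lambda>n. N (e n)", OF this \<open>0 \<le> q\<close> \<open>q < 1\<close>] rate(2)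
  show ?thesis
    unfolding e_def by (meson add_right_mono order_trans)
qed

end
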